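(* Let $\mathcal{A}=\langle Q,A,E,I,T\rangle$ be a finite automaton over the free monoid $A^*$ and let $\omega$ and $\omega'$ be two total orders on $Q$. Then $$\mathbf{N}\wedge\mathbf{S}\wedge\mathbf{P}\ \vdash\ \mathsf{SR}_\omega(\mathcal{A})\equiv\mathsf{SR}_{\omega'}(\mathcal{A}),$$ that is, the two expressions produced by the system-solution method for the orders $\omega$ and $\omega'$ can be proved equal using the natural identities $\mathbf{N}$ together with the aperiodic identities $\mathbf{S}$ and $\mathbf{P}$.
   Context: Rational expressions over $A^*$ are the well-formed formulas built from the constants $\mathsf{0}$ and $\mathsf{1}$ and the letters of $A$ by the binary operators $+$ and $\cdot$ and the unary operator ${}^*$. The expression $\mathsf{E}$ denotes the language $|\mathsf{E}|\subseteq A^*$ in the usual way. All expressions are taken reduced modulo the trivial identities $\mathsf{E}+\mathsf{0}\equiv\mathsf{E}$, $\mathsf{0}+\mathsf{E}\equiv\mathsf{E}$, $\mathsf{E}\cdot\mathsf{0}\equiv\mathsf{0}$, $\mathsf{0}\cdot\mathsf{E}\equiv\mathsf{0}$, $\mathsf{E}\cdot\mathsf{1}\equiv\mathsf{E}$, $\mathsf{1}\cdot\mathsf{E}\equiv\mathsf{E}$, $\mathsf{0}^*\equiv\mathsf{1}$. All computations on expressions below are performed modulo these identities. The natural identities $\mathbf{N}$ are: - associativity: $(\mathsf{E}+\mathsf{F})+\mathsf{G}\equiv\mathsf{E}+(\mathsf{F}+\mathsf{G})$ and $(\mathsf{E}\cdot\mathsf{F})\cdot\mathsf{G}\equiv\mathsf{E}\cdot(\mathsf{F}\cdot\mathsf{G})$;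 - distributivity: $\mathsf{E}\cdot(\mathsf{F}+\mathsf{G})\equiv\mathsf{E}\cdot\mathsf{F}+\mathsf{E}\cdot\mathsf{G}$ and $(\mathsf{E}+\mathsf{F})\cdot\mathsf{G}\equiv\mathsf{E}\cdot\mathsf{G}+\mathsf{F}\cdot\mathsf{G}$; - commutativity: $\mathsf{E}+\mathsf{F}\equiv\mathsf{F}+\mathsf{E}$. The aperiodic identities are: - $\mathbf{S}$: $(\mathsf{E}+\mathsf{F})^*\equiv\mathsf{E}^*\cdot(\mathsf{F}\cdot\mathsf{E}^* )^*$ and $(\mathsf{E}+\mathsf{F})^*\equiv(\mathsf{E}^*\cdot\mathsf{F})^*\cdot\mathsf{E}^*$; - $\mathbf{P}$: $(\mathsf{E}\cdot\mathsf{F})^*\equiv\mathsf{1}+\mathsf{E}\cdot(\mathsf{F}\cdot\mathsf{E})^*\cdot\mathsf{F}$. For a set $\mathcal{I}$ of identities, $\mathcal{I}\vdash\mathsf{X}\equiv\mathsf{Y}$ means that $\mathsf{X}$ and $\mathsf{Y}$ are related by the smallest congruence on expressions (for $+$, $\cdot$ and ${}^*$) that contains all instances of the identities in $\mathcal{I}$, working modulo the trivial identities. System-solution method. For $p,q\in Q$, let $\mathsf{E}_{p,q}$ be the sum, written in some fixed order and bracketing, of the letters labelling the transitions from $p$ to $q$; it is $\mathsf{0}$ if there is no such transition. The method maintains a set $Q'\subseteq Q$ and expressions $\mathsf{G}_p$, $\mathsf{H}$, $\mathsf{F}_{p,q}$, $\mathsf{K}_p$ for $p,q\in Q'$. The initial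 values are: - $Q'=Q$; - $\mathsf{G}_p=\mathsf{1}$ if $p\in I$ and $\mathsf{0}$ otherwise; - $\mathsf{H}=\mathsf{0}$; - $\mathsf{F}_{p,q}=\mathsf{E}_{p,q}$; - $\mathsf{K}_p=\mathsf{1}$ if $p\in T$ and $\mathsf{0}$ otherwise. The states of $Q$ are then eliminated one by one in increasing order for $\omega$. Eliminating $q\in Q'$ replaces the expressions, for all $r,p\in Q'\setminus\{q\}$, by: - $\mathsf{G}_r\leftarrow\mathsf{G}_r+\mathsf{G}_q\cdot\mathsf{F}_{q,q}^*\cdot\mathsf{F}_{q,r}$; - $\mathsf{H}\leftarrow\mathsf{H}+\mathsf{G}_q\cdot\mathsf{F}_{q,q}^*\cdot\mathsf{K}_q$; - $\mathsf{F}_{r,p}\leftarrow\mathsf{F}_{r,p}+\mathsf{F}_{r,q}\cdot\mathsf{F}_{q,q}^*\cdot\mathsf{F}_{q,p}$; - $\mathsf{K}_r\leftarrow\mathsf{K}_r+\mathsf{F}_{r,q}\cdot\mathsf{F}_{q,q}^*\cdot\mathsf{K}_q$; and then sets $Q'\leftarrow Q'\setminus\{q\}$. When $Q'$ is empty, the final value of $\mathsf{H}$ is the expression $\mathsf{SR}_\omega(\mathcal{A})$. It denotes the language accepted by $\mathcal{A}$. *)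

theory Defs
  imports Main
begin

datatype 'a rexp = RZero | ROne | RAtom 'a | RPlus "'a rexp" "'a rexp"
  | RTimes "'a rexp" "'a rexp" | RStar "'a rexp"

fun atoms :: "'a rexp \<Rightarrow> 'a set" where
  "atoms RZero = {}"
| "atoms ROne = {}"
| "atoms (RAtom a) = {a}"
| "atoms (RPlus E F) = atoms E \<union> atoms F"
| "atoms (RTimes E F) = atoms E \<union> atoms F"
| "atoms (RStar E) = atoms E"

text \<open>Operations modulo the trivial identities
  E+0=E, 0+E=E, E0=0, 0E=0, E1=E, 1E=E, 0*=1 (smart constructors).\<close>

definition rplus :: "'a rexp \<Rightarrow> 'a rexp \<Rightarrow> 'a rexp" where
  "rplus E F = (if E = RZero then F else if F = RZero then E else RPlus E F)"

definition rtimes :: "'a rexp \<Rightarrow> 'a rexp \<Rightarrow> 'a rexp" where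
  "rtimes E F = (if E = RZero \<or> F = RZero then RZero
                 else if E = ROne then F else if F = ROne then E else RTimes E F)"

definition rstar :: "'a rexp \<Rightarrow> 'a rexp" where
  "rstar E = (if E = RZero then ROne else RStar E)"

fun red :: "'a rexp \<Rightarrow> 'a rexp" where
  "red RZero = RZero"
| "red ROne = ROne"
| "red (RAtom a) = RAtom a"
| "red (RPlus E F) = rplus (red E) (red F)"
| "red (RTimes E F) = rtimes (red E) (red F)"
| "red (RStar E) = rstar (red E)"

definition rexp_over :: "'a set \<Rightarrow> 'a rexp \<Rightarrow> bool" where
  "rexp_over A X \<longleftrightarrow> red X = X \<and> atoms X \<subseteq> A"

text \<open>Instances (over A, taken modulo the trivial identities) of the
  natural identities N and the aperiodic identities S and P.\<close>
inductive NSP_ax :: "'a set \<Rightarrow> 'a rexp \<Rightarrow> 'a rexp \<Rightarrow> bool" for A where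
  assoc_plus: "atoms E \<union> atoms F \<union> atoms G \<subseteq> A \<Longrightarrow>
     NSP_ax A (red (RPlus (RPlus E F) G)) (red (RPlus E (RPlus F G)))"
| assoc_times: "atoms E \<union> atoms F \<union> atoms G \<subseteq> A \<Longrightarrow>
     NSP_ax A (red (RTimes (RTimes E F) G)) (red (RTimes E (RTimes F G)))"
| distr_left: "atoms E \<union> atoms F \<union> atoms G \<subseteq> A \<Longrightarrow>
     NSP_ax A (red (RTimes E (RPlus F G))) (red (RPlus (RTimes E F) (RTimes E G)))"
| distr_right: "atoms E \<union> atoms F \<union> atoms G \<subseteq> A \<Longrightarrow>
     NSP_ax A (red (RTimes (RPlus E F) G)) (red (RPlus (RTimes E G) (RTimes F G)))"
| comm: "atoms E \<union> atoms F \<subseteq> A \<Longrightarrow>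
     NSP_ax A (red (RPlus E F)) (red (RPlus F E))"
| S1: "atoms E \<union> atoms F \<subseteq> A \<Longrightarrow>
     NSP_ax A (red (RStar (RPlus E F))) (red (RTimes (RStar E) (RStar (RTimes F (RStar E)))))"
| S2: "atoms E \<union> atoms F \<subseteq> A \<Longrightarrow>
     NSP_ax A (red (RStar (RPlus E F))) (red (RTimes (RStar (RTimes (RStar E) F)) (RStar E)))"
| P: "atoms E \<union> atoms F \<subseteq> A \<Longrightarrow>
     NSP_ax A (red (RStar (RTimes E F)))
               (red (RPlus ROne (RTimes (RTimes E (RStar (RTimes F E))) F)))"

inductive derivable :: "('a rexp \<Rightarrow> 'a rexp \<Rightarrow> bool) \<Rightarrow> 'a set \<Rightarrow> 'a rexp \<Rightarrow> 'a rexp \<Rightarrow> bool"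
  for Ax A where
  ax: "Ax X Y \<Longrightarrow> derivable Ax A X Y"
| refl: "rexp_over A X \<Longrightarrow> derivable Ax A X X"
| sym: "derivable Ax A X Y \<Longrightarrow> derivable Ax A Y X"
| trans: "derivable Ax A X Y \<Longrightarrow> derivable Ax A Y Z \<Longrightarrow> derivable Ax A X Z"
| cong_plus: "derivable Ax A X X' \<Longrightarrow> derivable Ax A Y Y' \<Longrightarrow>
     derivable Ax A (rplus X Y) (rplus X' Y')"
| cong_times: "derivable Ax A X X' \<Longrightarrow> derivable Ax A Y Y' \<Longrightarrow>
     derivable Ax A (rtimes X Y) (rtimes X' Y')"
| cong_star: "derivable Ax A X X' \<Longrightarrow> derivable Ax A (rstar X) (rstar X')"

definition finite_automaton :: "'q set \<Rightarrow> 'a set \<Rightarrow> ('q \<times> 'a \<times> 'q) set \<Rightarrow> 'q set \<Rightarrow> 'q set \<Rightarrow> bool"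
  where "finite_automaton Q A E I T \<longleftrightarrow> finite Q \<and> finite A \<and>
     E \<subseteq> Q \<times> A \<times> Q \<and> I \<subseteq> Q \<and> T \<subseteq> Q"

inductive sum_of :: "'a rexp \<Rightarrow> 'a set \<Rightarrow> bool" where
  atom: "sum_of (RAtom a) {a}"
| plus: "sum_of X S \<Longrightarrow> sum_of Y S' \<Longrightarrow> S \<inter> S' = {} \<Longrightarrow> sum_of (RPlus X Y) (S \<union> S')"

text \<open>lab p q is a valid choice of the expression E_{p,q}.\<close>
definition label_exprs :: "('q \<times> 'a \<times> 'q) set \<Rightarrow> ('q \<Rightarrow> 'q \<Rightarrow> 'a rexp) \<Rightarrow> bool" where
  "label_exprs E lab \<longleftrightarrow> (\<forall>p q. let S = {a. (p, a, q) \<in> E} in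
      (S = {} \<and> lab p q = RZero) \<or> (S \<noteq> {} \<and> sum_of (lab p q) S))"

datatype ('q, 'a) sstate = SState "'q set" "'q \<Rightarrow> 'a rexp" "'a rexp"
   "'q \<Rightarrow> 'q \<Rightarrow> 'a rexp" "'q \<Rightarrow> 'a rexp"

fun elim :: "('q, 'a) sstate \<Rightarrow> 'q \<Rightarrow> ('q, 'a) sstate" where
  "elim (SState Q' G H F K) q =
     (let s = rstar (F q q); R = Q' - {q} in
      SState R
        (\<lambda>r. if r \<in> R then rplus (G r) (rtimes (rtimes (G q) s) (F q r)) else G r)
        (rplus H (rtimes (rtimes (G q) s) (K q)))
        (\<lambda>r p. if r \<in> R \<and> p \<in> R then rplus (F r p) (rtimes (rtimes (F r q) s) (F q p)) else F r p)
        (\<lambda>r. if r \<in> R then rplus (K r) (rtimes (rtimes (F r q) s) (K q)) else K r))"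

fun sstate_H :: "('q, 'a) sstate \<Rightarrow> 'a rexp" where
  "sstate_H (SState _ _ H _ _) = H"

text \<open>A total order \<omega> on Q is given as the list of the elements of Q in increasing order.\<close>
definition total_order_list :: "'q set \<Rightarrow> 'q list \<Rightarrow> bool" where
  "total_order_list Q \<omega> \<longleftrightarrow> distinct \<omega> \<and> set \<omega> = Q"

definition SR :: "'q list \<Rightarrow> 'q set \<Rightarrow> 'q set \<Rightarrow> 'q set \<Rightarrow> ('q \<Rightarrow> 'q \<Rightarrow> 'a rexp) \<Rightarrow> 'a rexp" where
  "SR \<omega> Q I T lab = sstate_H (foldl elim
      (SState Q (\<lambda>p. if p \<in> I then ROne else RZero) RZero lab
              (\<lambda>p. if p \<in> T then ROne else RZero)) \<omega>)"

end

theory Submission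
  imports Defs "HOL-Library.Multiset"
begin

text \<open>Eliminating the states in two different orders can be related by a sequence of swaps of
  two consecutive eliminations, and it suffices to show that swapping the eliminations of two
  states \<open>p, q\<close> yields provably equal coefficients. Writing \<open>a, b, c, d\<close> for
  \<open>F\<^sub>p\<^sub>p, F\<^sub>p\<^sub>q, F\<^sub>q\<^sub>p, F\<^sub>q\<^sub>q\<close>, both orders produce, up to
  the semiring identities \<open>N\<close>, the coefficients of the star of the 2\<times>2 matrix
  \<open>[[a, b], [c, d]]\<close>, computed by pivoting on \<open>p\<close> or on \<open>q\<close>. That the two pivotings agree
  follows from \<open>S\<close> and \<open>P\<close> via
  \<open>(a + b d\<^sup>* c)\<^sup>* \<equiv> a\<^sup>* + a\<^sup>* b (d + c a\<^sup>* b)\<^sup>* c a\<^sup>*\<close> and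
  \<open>a\<^sup>* b (d + c a\<^sup>* b)\<^sup>* \<equiv> (a + b d\<^sup>* c)\<^sup>* b d\<^sup>*\<close>.\<close>

lemma rplus_RZero_left [simp]: "rplus RZero X = X"
  and rplus_RZero_right [simp]: "rplus X RZero = X"
  by (simp_all add: rplus_def)

lemma rtimes_RZero_left [simp]: "rtimes RZero X = RZero"
  and rtimes_RZero_right [simp]: "rtimes X RZero = RZero"
  and rtimes_ROne_left [simp]: "rtimes ROne X = X"
  and rtimes_ROne_right [simp]: "rtimes X ROne = X"
  by (simp_all add: rtimes_def)

lemma red_rplus: "red X = X \<Longrightarrow> red Y = Y \<Longrightarrow> red (rplus X Y) = rplus X Y"
  by (auto simp: rplus_def)

lemma red_rtimes: "red X = X \<Longrightarrow> red Y = Y \<Longrightarrow> red (rtimes X Y) = rtimes X Y"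
  by (auto simp: rtimes_def rplus_def)

lemma red_rstar: "red X = X \<Longrightarrow> red (rstar X) = rstar X"
  by (auto simp: rstar_def)

lemma red_idem: "red (red X) = red X"
  by (induction X) (auto simp: red_rplus red_rtimes red_rstar)

lemma atoms_rplus: "atoms (rplus X Y) \<subseteq> atoms X \<union> atoms Y"
  by (auto simp: rplus_def)

lemma atoms_rtimes: "atoms (rtimes X Y) \<subseteq> atoms X \<union> atoms Y"
  by (auto simp: rtimes_def)

lemma atoms_rstar: "atoms (rstar X) \<subseteq> atoms X"
  by (auto simp: rstar_def)

lemma atoms_red: "atoms (red X) \<subseteq> atoms X"
  by (induction X) (use atoms_rplus atoms_rtimes atoms_rstar in fastforce)+

lemma rexp_over_RZero [simp]: "rexp_over A RZero"
  and rexp_over_ROne [simp]: "rexp_over A ROne"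
  by (simp_all add: rexp_over_def)

lemma rexp_over_rplus [simp]: "rexp_over A X \<Longrightarrow> rexp_over A Y \<Longrightarrow> rexp_over A (rplus X Y)"
  unfolding rexp_over_def using atoms_rplus[of X Y] red_rplus[of X Y] by blast

lemma rexp_over_rtimes [simp]: "rexp_over A X \<Longrightarrow> rexp_over A Y \<Longrightarrow> rexp_over A (rtimes X Y)"
  unfolding rexp_over_def using atoms_rtimes[of X Y] red_rtimes[of X Y] by blast

lemma rexp_over_rstar [simp]: "rexp_over A X \<Longrightarrow> rexp_over A (rstar X)"
  unfolding rexp_over_def using atoms_rstar[of X] red_rstar[of X] by blast

lemma rexp_over_red: "atoms X \<subseteq> A \<Longrightarrow> rexp_over A (red X)"
  unfolding rexp_over_def using red_idem[of X] atoms_red[of X] by blast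

lemma sum_of_rexp_over: "sum_of X S \<Longrightarrow> S \<subseteq> A \<Longrightarrow> rexp_over A X"
proof -
  have "sum_of X S \<Longrightarrow> red X = X \<and> atoms X = S \<and> X \<noteq> RZero"
    by (induction rule: sum_of.induct) (auto simp: rplus_def)
  then show "sum_of X S \<Longrightarrow> S \<subseteq> A \<Longrightarrow> rexp_over A X"
    by (simp add: rexp_over_def)
qed

abbreviation nsp_eq :: "'a set \<Rightarrow> 'a rexp \<Rightarrow> 'a rexp \<Rightarrow> bool" where
  "nsp_eq A X Y \<equiv> derivable (NSP_ax A) A X Y"

lemma NSP_ax_rexp_over: "NSP_ax A X Y \<Longrightarrow> rexp_over A X \<and> rexp_over A Y"
  by (induction rule: NSP_ax.induct) (simp_all add: rexp_over_red)

lemma nsp_eq_rexp_over: "nsp_eq A X Y \<Longrightarrow> rexp_over A X \<and> rexp_over A Y"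
  by (induction rule: derivable.induct) (simp_all add: NSP_ax_rexp_over)

lemma nsp_eq_refl [simp]: "rexp_over A X \<Longrightarrow> nsp_eq A X X"
  by (rule derivable.refl)

lemmas nsp_eq_ax = derivable.ax[of "NSP_ax A" X Y A for A X Y]
  and nsp_eq_sym = derivable.sym[of "NSP_ax A" A for A]
  and nsp_eq_trans = derivable.trans[of "NSP_ax A" A for A]
  and nsp_eq_rplus = derivable.cong_plus[of "NSP_ax A" A for A]
  and nsp_eq_rtimes = derivable.cong_times[of "NSP_ax A" A for A]
  and nsp_eq_rstar = derivable.cong_star[of "NSP_ax A" A for A]

declare nsp_eq_trans [trans]

context
  fixes A :: "'a set" and X Y Z :: "'a rexp"
  assumes X: "rexp_over A X" and Y: "rexp_over A Y" and Z: "rexp_over A Z"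
begin

private lemma reduced_XYZ: "red X = X" "red Y = Y" "red Z = Z"
  and atoms_XYZ: "atoms X \<union> atoms Y \<union> atoms Z \<subseteq> A"
  using X Y Z by (auto simp: rexp_over_def)

lemma nsp_rplus_assoc: "nsp_eq A (rplus (rplus X Y) Z) (rplus X (rplus Y Z))"
  using nsp_eq_ax[OF NSP_ax.assoc_plus[OF atoms_XYZ]] by (simp add: reduced_XYZ)

lemma nsp_rtimes_assoc: "nsp_eq A (rtimes (rtimes X Y) Z) (rtimes X (rtimes Y Z))"
  using nsp_eq_ax[OF NSP_ax.assoc_times[OF atoms_XYZ]] by (simp add: reduced_XYZ)

lemma nsp_distrib_left: "nsp_eq A (rtimes X (rplus Y Z)) (rplus (rtimes X Y) (rtimes X Z))"
  using nsp_eq_ax[OF NSP_ax.distr_left[OF atoms_XYZ]] by (simp add: reduced_XYZ)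

lemma nsp_distrib_right: "nsp_eq A (rtimes (rplus X Y) Z) (rplus (rtimes X Z) (rtimes Y Z))"
  using nsp_eq_ax[OF NSP_ax.distr_right[OF atoms_XYZ]] by (simp add: reduced_XYZ)

end

context
  fixes A :: "'a set" and X Y :: "'a rexp"
  assumes X: "rexp_over A X" and Y: "rexp_over A Y"
begin

private lemma reduced_XY: "red X = X" "red Y = Y"
  and atoms_XY: "atoms X \<union> atoms Y \<subseteq> A"
  using X Y by (auto simp: rexp_over_def)

lemma nsp_rplus_commute: "nsp_eq A (rplus X Y) (rplus Y X)"
  using nsp_eq_ax[OF NSP_ax.comm[OF atoms_XY]] by (simp add: reduced_XY)

lemma nsp_star_plus_S1: "nsp_eq A (rstar (rplus X Y)) (rtimes (rstar X) (rstar (rtimes Y (rstar X))))"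
  using nsp_eq_ax[OF NSP_ax.S1[OF atoms_XY]] by (simp add: reduced_XY)

lemma nsp_star_plus_S2: "nsp_eq A (rstar (rplus X Y)) (rtimes (rstar (rtimes (rstar X) Y)) (rstar X))"
  using nsp_eq_ax[OF NSP_ax.S2[OF atoms_XY]] by (simp add: reduced_XY)

lemma nsp_star_times_P:
  "nsp_eq A (rstar (rtimes X Y)) (rplus ROne (rtimes (rtimes X (rstar (rtimes Y X))) Y))"
  using nsp_eq_ax[OF NSP_ax.P[OF atoms_XY]] by (simp add: reduced_XY)

end

subsection \<open>Normalisation in the semiring fragment\<close>

text \<open>A reflection of \<open>+\<close> and \<open>\<cdot>\<close> over variables, used to discharge identities that follow from \<open>N\<close>
  alone: two terms with the same multiset of (noncommutative) monomials are provably equal.\<close>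

datatype sexp = SVar nat | SZero | SOne
  | SPlus sexp sexp (infixl "\<oplus>" 65) | STimes sexp sexp (infixl "\<otimes>" 70)

fun seval :: "'a rexp list \<Rightarrow> sexp \<Rightarrow> 'a rexp" where
  "seval \<rho> (SVar i) = \<rho> ! i"
| "seval \<rho> SZero = RZero"
| "seval \<rho> SOne = ROne"
| "seval \<rho> (e \<oplus> f) = rplus (seval \<rho> e) (seval \<rho> f)"
| "seval \<rho> (e \<otimes> f) = rtimes (seval \<rho> e) (seval \<rho> f)"

fun monomials :: "sexp \<Rightarrow> nat list list" where
  "monomials (SVar i) = [[i]]"
| "monomials SZero = []"
| "monomials SOne = [[]]"
| "monomials (e \<oplus> f) = monomials e @ monomials f"
| "monomials (e \<otimes> f) = [m @ n. m \<leftarrow> monomials e, n \<leftarrow> monomials f]"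

fun vars_below :: "nat \<Rightarrow> sexp \<Rightarrow> bool" where
  "vars_below k (SVar i) \<longleftrightarrow> i < k"
| "vars_below k SZero \<longleftrightarrow> True"
| "vars_below k SOne \<longleftrightarrow> True"
| "vars_below k (e \<oplus> f) \<longleftrightarrow> vars_below k e \<and> vars_below k f"
| "vars_below k (e \<otimes> f) \<longleftrightarrow> vars_below k e \<and> vars_below k f"

fun eval_monomial :: "'a rexp list \<Rightarrow> nat list \<Rightarrow> 'a rexp" where
  "eval_monomial \<rho> [] = ROne"
| "eval_monomial \<rho> (i # m) = rtimes (\<rho> ! i) (eval_monomial \<rho> m)"

fun eval_monomials :: "'a rexp list \<Rightarrow> nat list list \<Rightarrow> 'a rexp" where
  "eval_monomials \<rho> [] = RZero"
| "eval_monomials \<rho> (m # ms) = rplus (eval_monomial \<rho> m) (eval_monomials \<rho> ms)"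

abbreviation env_over :: "'a set \<Rightarrow> 'a rexp list \<Rightarrow> bool" where
  "env_over A \<rho> \<equiv> \<forall>X\<in>set \<rho>. rexp_over A X"

abbreviation monomial_below :: "nat \<Rightarrow> nat list \<Rightarrow> bool" where
  "monomial_below k m \<equiv> \<forall>i\<in>set m. i < k"

abbreviation monomials_below :: "nat \<Rightarrow> nat list list \<Rightarrow> bool" where
  "monomials_below k ms \<equiv> \<forall>m\<in>set ms. monomial_below k m"

lemma monomials_below_vars: "vars_below k e \<Longrightarrow> monomials_below k (monomials e)"
  by (induction e) auto

lemma rexp_over_eval_monomial:
  "env_over A \<rho> \<Longrightarrow> monomial_below (length \<rho>) m \<Longrightarrow> rexp_over A (eval_monomial \<rho> m)"
  by (induction m) auto

lemma rexp_over_eval_monomials: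
  "env_over A \<rho> \<Longrightarrow> monomials_below (length \<rho>) ms \<Longrightarrow> rexp_over A (eval_monomials \<rho> ms)"
  by (induction ms) (auto simp: rexp_over_eval_monomial)

context
  fixes A :: "'a set" and \<rho> :: "'a rexp list"
  assumes env: "env_over A \<rho>"
begin

lemma eval_monomial_append:
  "monomial_below (length \<rho>) m \<Longrightarrow> monomial_below (length \<rho>) n \<Longrightarrow>
    nsp_eq A (rtimes (eval_monomial \<rho> m) (eval_monomial \<rho> n)) (eval_monomial \<rho> (m @ n))"
proof (induction m)
  case Nil
  then show ?case by (simp add: env rexp_over_eval_monomial)
next
  case (Cons i m)
  have "nsp_eq A (rtimes (rtimes (\<rho> ! i) (eval_monomial \<rho> m)) (eval_monomial \<rho> n))
      (rtimes (\<rho> ! i) (rtimes (eval_monomial \<rho> m) (eval_monomial \<rho> n)))"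
    using Cons.prems env by (intro nsp_rtimes_assoc) (auto simp: rexp_over_eval_monomial)
  also have "nsp_eq A \<dots> (rtimes (\<rho> ! i) (eval_monomial \<rho> (m @ n)))"
    using Cons env by (intro nsp_eq_rtimes) auto
  finally show ?case by simp
qed

lemma eval_monomials_append:
  "monomials_below (length \<rho>) ms \<Longrightarrow> monomials_below (length \<rho>) ns \<Longrightarrow>
    nsp_eq A (rplus (eval_monomials \<rho> ms) (eval_monomials \<rho> ns)) (eval_monomials \<rho> (ms @ ns))"
proof (induction ms)
  case Nil
  then show ?case by (simp add: env rexp_over_eval_monomials)
next
  case (Cons m ms)
  have "nsp_eq A (rplus (rplus (eval_monomial \<rho> m) (eval_monomials \<rho> ms)) (eval_monomials \<rho> ns))
      (rplus (eval_monomial \<rho> m) (rplus (eval_monomials \<rho> ms) (eval_monomials \<rho> ns)))"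
    using Cons.prems env
    by (intro nsp_rplus_assoc) (auto simp: rexp_over_eval_monomial rexp_over_eval_monomials)
  also have "nsp_eq A \<dots> (rplus (eval_monomial \<rho> m) (eval_monomials \<rho> (ms @ ns)))"
    using Cons env by (intro nsp_eq_rplus) (auto simp: rexp_over_eval_monomial)
  finally show ?case by simp
qed

lemma eval_monomial_times_monomials:
  "monomial_below (length \<rho>) m \<Longrightarrow> monomials_below (length \<rho>) ns \<Longrightarrow>
    nsp_eq A (rtimes (eval_monomial \<rho> m) (eval_monomials \<rho> ns)) (eval_monomials \<rho> [m @ n. n \<leftarrow> ns])"
proof (induction ns)
  case Nil
  then show ?case by simp
next
  case (Cons n ns)
  have "nsp_eq A (rtimes (eval_monomial \<rho> m) (rplus (eval_monomial \<rho> n) (eval_monomials \<rho> ns)))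
      (rplus (rtimes (eval_monomial \<rho> m) (eval_monomial \<rho> n)) (rtimes (eval_monomial \<rho> m) (eval_monomials \<rho> ns)))"
    using Cons.prems env
    by (intro nsp_distrib_left) (auto simp: rexp_over_eval_monomial rexp_over_eval_monomials)
  also have "nsp_eq A \<dots> (rplus (eval_monomial \<rho> (m @ n)) (eval_monomials \<rho> [m @ n. n \<leftarrow> ns]))"
    using Cons by (intro nsp_eq_rplus eval_monomial_append) auto
  finally show ?case by simp
qed

lemma eval_monomials_times:
  "monomials_below (length \<rho>) ms \<Longrightarrow> monomials_below (length \<rho>) ns \<Longrightarrow>
    nsp_eq A (rtimes (eval_monomials \<rho> ms) (eval_monomials \<rho> ns))
      (eval_monomials \<rho> [m @ n. m \<leftarrow> ms, n \<leftarrow> ns])"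
proof (induction ms)
  case Nil
  then show ?case by simp
next
  case (Cons m ms)
  have "nsp_eq A (rtimes (rplus (eval_monomial \<rho> m) (eval_monomials \<rho> ms)) (eval_monomials \<rho> ns))
      (rplus (rtimes (eval_monomial \<rho> m) (eval_monomials \<rho> ns)) (rtimes (eval_monomials \<rho> ms) (eval_monomials \<rho> ns)))"
    using Cons.prems env
    by (intro nsp_distrib_right) (auto simp: rexp_over_eval_monomial rexp_over_eval_monomials)
  also have "nsp_eq A \<dots> (rplus (eval_monomials \<rho> [m @ n. n \<leftarrow> ns])
      (eval_monomials \<rho> [m @ n. m \<leftarrow> ms, n \<leftarrow> ns]))"
    using Cons by (intro nsp_eq_rplus eval_monomial_times_monomials) auto
  also have "nsp_eq A \<dots> (eval_monomials \<rho> ([m @ n. n \<leftarrow> ns] @ [m @ n. m \<leftarrow> ms, n \<leftarrow> ns]))"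
    using Cons.prems by (intro eval_monomials_append) auto
  finally show ?case by simp
qed

lemma seval_monomials:
  "vars_below (length \<rho>) e \<Longrightarrow> nsp_eq A (seval \<rho> e) (eval_monomials \<rho> (monomials e))"
proof (induction e)
  case (SVar i)
  then show ?case using env by auto
next
  case (SPlus e f)
  then have "nsp_eq A (seval \<rho> (e \<oplus> f)) (rplus (eval_monomials \<rho> (monomials e)) (eval_monomials \<rho> (monomials f)))"
    by (auto intro: nsp_eq_rplus)
  also have "nsp_eq A \<dots> (eval_monomials \<rho> (monomials (e \<oplus> f)))"
    using SPlus.prems by (auto intro: eval_monomials_append dest: monomials_below_vars)
  finally show ?case .
next
  case (STimes e f)
  then have "nsp_eq A (seval \<rho> (e \<otimes> f)) (rtimes (eval_monomials \<rho> (monomials e)) (eval_monomials \<rho> (monomials f)))"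
    by (auto intro: nsp_eq_rtimes)
  also have "nsp_eq A \<dots> (eval_monomials \<rho> (monomials (e \<otimes> f)))"
    using STimes.prems by (auto intro: eval_monomials_times dest: monomials_below_vars)
  finally show ?case .
qed auto

lemma eval_monomials_move_to_front:
  "monomials_below (length \<rho>) (us @ x # vs) \<Longrightarrow>
    nsp_eq A (eval_monomials \<rho> (us @ x # vs)) (eval_monomials \<rho> (x # us @ vs))"
proof (induction us)
  case Nil
  then show ?case using env by (auto simp: rexp_over_eval_monomial rexp_over_eval_monomials)
next
  case (Cons u us)
  let ?u = "eval_monomial \<rho> u" and ?x = "eval_monomial \<rho> x" and ?r = "eval_monomials \<rho> (us @ vs)"
  have over: "rexp_over A ?u" "rexp_over A ?x" "rexp_over A ?r"
    using Cons.prems env by (auto simp: rexp_over_eval_monomial rexp_over_eval_monomials)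
  have "nsp_eq A (eval_monomials \<rho> ((u # us) @ x # vs)) (rplus ?u (rplus ?x ?r))"
    using Cons over by (auto intro: nsp_eq_rplus)
  also have "nsp_eq A \<dots> (rplus (rplus ?u ?x) ?r)"
    using over by (intro nsp_rplus_assoc[THEN nsp_eq_sym])
  also have "nsp_eq A \<dots> (rplus (rplus ?x ?u) ?r)"
    using over by (meson nsp_eq_rplus nsp_rplus_commute nsp_eq_refl)
  also have "nsp_eq A \<dots> (rplus ?x (rplus ?u ?r))"
    using over by (intro nsp_rplus_assoc)
  finally show ?case by simp
qed

lemma eval_monomials_perm:
  "mset ms = mset ns \<Longrightarrow> monomials_below (length \<rho>) ms \<Longrightarrow>
    nsp_eq A (eval_monomials \<rho> ms) (eval_monomials \<rho> ns)"
proof (induction ms arbitrary: ns)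
  case Nil
  then show ?case by simp
next
  case (Cons m ms)
  then obtain us vs where ns: "ns = us @ m # vs"
    by (metis list.set_intros(1) set_mset_mset split_list)
  with Cons.prems have ms: "mset ms = mset (us @ vs)" by simp
  have "set ns = set (m # ms)"
    using Cons.prems(1) by (metis mset_eq_setD)
  with Cons.prems have below: "monomials_below (length \<rho>) ns" by simp
  have "nsp_eq A (eval_monomials \<rho> (m # ms)) (eval_monomials \<rho> (m # us @ vs))"
    using Cons.IH[OF ms] Cons.prems env by (auto intro!: nsp_eq_rplus simp: rexp_over_eval_monomial)
  also have "nsp_eq A \<dots> (eval_monomials \<rho> ns)"
    using eval_monomials_move_to_front below unfolding ns by (blast intro: nsp_eq_sym)
  finally show ?case .
qed

end

lemma eval_monomials_subst:
  "list_all2 (nsp_eq A) \<rho> \<sigma> \<Longrightarrow> monomials_below (length \<rho>) ms \<Longrightarrow>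
    nsp_eq A (eval_monomials \<rho> ms) (eval_monomials \<sigma> ms)"
proof -
  assume eq: "list_all2 (nsp_eq A) \<rho> \<sigma>"
  have "monomial_below (length \<rho>) m \<Longrightarrow> nsp_eq A (eval_monomial \<rho> m) (eval_monomial \<sigma> m)" for m
    using eq by (induction m) (auto intro!: nsp_eq_rtimes simp: list_all2_nthD list_all2_lengthD)
  then show "monomials_below (length \<rho>) ms \<Longrightarrow> ?thesis"
    by (induction ms) (auto intro!: nsp_eq_rplus)
qed

lemma env_over_list_all2_nsp_eq:
  "list_all2 (nsp_eq A) \<rho> \<sigma> \<Longrightarrow> env_over A \<rho> \<and> env_over A \<sigma>"
  by (induction rule: list_all2_induct) (auto dest: nsp_eq_rexp_over)

theorem nsp_eq_by_monomials:
  assumes eq: "list_all2 (nsp_eq A) \<rho> \<sigma>"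
    and vars: "vars_below (length \<rho>) e" "vars_below (length \<rho>) f"
    and monomials: "mset (monomials e) = mset (monomials f)"
  shows "nsp_eq A (seval \<rho> e) (seval \<sigma> f)"
proof -
  have env: "env_over A \<rho>" "env_over A \<sigma>" and len: "length \<sigma> = length \<rho>"
    using env_over_list_all2_nsp_eq[OF eq] list_all2_lengthD[OF eq] by auto
  have "nsp_eq A (seval \<rho> e) (eval_monomials \<rho> (monomials e))"
    using env vars by (intro seval_monomials)
  also have "nsp_eq A \<dots> (eval_monomials \<rho> (monomials f))"
    using env vars monomials by (intro eval_monomials_perm monomials_below_vars)
  also have "nsp_eq A \<dots> (eval_monomials \<sigma> (monomials f))"
    using eq vars by (intro eval_monomials_subst monomials_below_vars)
  also have "nsp_eq A \<dots> (seval \<sigma> f)"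
    using seval_monomials[OF env(2)] vars len by (auto intro: nsp_eq_sym)
  finally show ?thesis .
qed

subsection \<open>Stars of two-state systems\<close>

lemma nsp_star_plus_unfold:
  assumes X: "rexp_over A X" and Y: "rexp_over A Y"
  shows "nsp_eq A (rstar (rplus X Y)) (rplus (rstar X) (rtimes (rtimes (rstar (rplus X Y)) Y) (rstar X)))"
proof -
  let ?Xs = "rstar X"
  let ?Z = "rstar (rtimes Y ?Xs)"
  have "nsp_eq A (rstar (rplus X Y)) (rtimes (rstar (rtimes ?Xs Y)) ?Xs)"
    using X Y by (rule nsp_star_plus_S2)
  also have "nsp_eq A \<dots> (rtimes (rplus ROne (rtimes (rtimes ?Xs ?Z) Y)) ?Xs)"
    using X Y by (intro nsp_eq_rtimes[OF nsp_star_times_P nsp_eq_refl]) auto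
  also have "nsp_eq A \<dots> (rplus ?Xs (rtimes (rtimes (rtimes ?Xs ?Z) Y) ?Xs))"
    using nsp_eq_by_monomials[of A "[?Xs, ?Z, Y]" "[?Xs, ?Z, Y]"
        "(SOne \<oplus> SVar 0 \<otimes> SVar 1 \<otimes> SVar 2) \<otimes> SVar 0" "SVar 0 \<oplus> SVar 0 \<otimes> SVar 1 \<otimes> SVar 2 \<otimes> SVar 0"]
      X Y by (simp add: add_mset_commute)
  also have "nsp_eq A \<dots> (rplus ?Xs (rtimes (rtimes (rstar (rplus X Y)) Y) ?Xs))"
    using nsp_eq_by_monomials[of A "[?Xs, rtimes ?Xs ?Z, Y]" "[?Xs, rstar (rplus X Y), Y]"
        "SVar 0 \<oplus> SVar 1 \<otimes> SVar 2 \<otimes> SVar 0" "SVar 0 \<oplus> SVar 1 \<otimes> SVar 2 \<otimes> SVar 0"]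
      X Y nsp_eq_sym[OF nsp_star_plus_S1[OF X Y]] by simp
  finally show ?thesis .
qed

context
  fixes A :: "'a set" and a b c d :: "'a rexp"
  assumes a: "rexp_over A a" and b: "rexp_over A b" and c: "rexp_over A c" and d: "rexp_over A d"
begin

text \<open>The diagonal and off-diagonal entries of the star of the matrix \<open>[[a, b], [c, d]]\<close>,
  computed by pivoting on the second state (left-hand sides) and on the first (right-hand sides).\<close>

lemma nsp_star_pivot:
  "nsp_eq A (rstar (rplus a (rtimes (rtimes b (rstar d)) c)))
    (rplus (rstar a) (rtimes (rtimes (rtimes (rtimes (rstar a) b)
        (rstar (rplus d (rtimes (rtimes c (rstar a)) b)))) c) (rstar a)))"
proof -
  let ?as = "rstar a" and ?ds = "rstar d"
  let ?F = "rtimes (rtimes c ?as) b"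
  let ?G = "rtimes (rtimes ?ds c) ?as"
  let ?W = "rstar (rtimes ?ds ?F)"
  have "nsp_eq A (rstar (rplus a (rtimes (rtimes b ?ds) c)))
      (rtimes ?as (rstar (rtimes (rtimes (rtimes b ?ds) c) ?as)))"
    using a b c d by (intro nsp_star_plus_S1) auto
  also have "nsp_eq A \<dots> (rtimes ?as (rstar (rtimes b ?G)))"
  proof -
    have "nsp_eq A (rtimes (rtimes (rtimes b ?ds) c) ?as) (rtimes b ?G)"
      using nsp_eq_by_monomials[of A "[b, ?ds, c, ?as]" "[b, ?ds, c, ?as]"
          "SVar 0 \<otimes> SVar 1 \<otimes> SVar 2 \<otimes> SVar 3" "SVar 0 \<otimes> (SVar 1 \<otimes> SVar 2 \<otimes> SVar 3)"]
        a b c d by simp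
    then show ?thesis
      using a by (intro nsp_eq_rtimes[OF nsp_eq_refl nsp_eq_rstar]) simp_all
  qed
  also have "nsp_eq A \<dots> (rtimes ?as (rplus ROne (rtimes (rtimes b (rstar (rtimes ?G b))) ?G)))"
    using a b c d by (intro nsp_eq_rtimes[OF nsp_eq_refl nsp_star_times_P]) simp_all
  also have "nsp_eq A \<dots> (rplus ?as (rtimes (rtimes (rtimes (rtimes ?as b) (rtimes ?W ?ds)) c) ?as))"
  proof -
    have "nsp_eq A (rtimes ?G b) (rtimes ?ds ?F)"
      using nsp_eq_by_monomials[of A "[?ds, c, ?as, b]" "[?ds, c, ?as, b]"
          "SVar 0 \<otimes> SVar 1 \<otimes> SVar 2 \<otimes> SVar 3" "SVar 0 \<otimes> (SVar 1 \<otimes> SVar 2 \<otimes> SVar 3)"]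
        a b c d by simp
    then have "nsp_eq A (rstar (rtimes ?G b)) ?W"
      by (rule nsp_eq_rstar)
    then show ?thesis
      using nsp_eq_by_monomials[of A "[?as, b, rstar (rtimes ?G b), ?ds, c]" "[?as, b, ?W, ?ds, c]"
          "SVar 0 \<otimes> (SOne \<oplus> SVar 1 \<otimes> SVar 2 \<otimes> (SVar 3 \<otimes> SVar 4 \<otimes> SVar 0))"
          "SVar 0 \<oplus> SVar 0 \<otimes> SVar 1 \<otimes> (SVar 2 \<otimes> SVar 3) \<otimes> SVar 4 \<otimes> SVar 0"]
        a b c d by (simp add: add_mset_commute)
  qed
  also have "nsp_eq A \<dots> (rplus ?as (rtimes (rtimes (rtimes (rtimes ?as b) (rstar (rplus d ?F))) c) ?as))"
    using nsp_eq_by_monomials[of A "[?as, b, rtimes ?W ?ds, c]" "[?as, b, rstar (rplus d ?F), c]"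
        "SVar 0 \<oplus> SVar 0 \<otimes> SVar 1 \<otimes> SVar 2 \<otimes> SVar 3 \<otimes> SVar 0"
        "SVar 0 \<oplus> SVar 0 \<otimes> SVar 1 \<otimes> SVar 2 \<otimes> SVar 3 \<otimes> SVar 0"]
      a b c d nsp_eq_sym[OF nsp_star_plus_S2[of A d ?F]] by simp
  finally show ?thesis .
qed

lemma nsp_star_pivot_offdiag:
  "nsp_eq A (rtimes (rtimes (rstar a) b) (rstar (rplus d (rtimes (rtimes c (rstar a)) b))))
    (rtimes (rtimes (rstar (rplus a (rtimes (rtimes b (rstar d)) c))) b) (rstar d))"
proof -
  let ?as = "rstar a" and ?ds = "rstar d"
  let ?F = "rtimes (rtimes c ?as) b"
  let ?Ds = "rstar (rplus d ?F)"
  let ?As = "rstar (rplus a (rtimes (rtimes b ?ds) c))"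
  let ?T = "rplus ?as (rtimes (rtimes (rtimes (rtimes ?as b) ?Ds) c) ?as)"
  let ?U = "rplus ?ds (rtimes (rtimes ?Ds ?F) ?ds)"
  have "nsp_eq A (rtimes (rtimes ?as b) ?Ds) (rtimes (rtimes ?as b) ?U)"
    using a b c d by (intro nsp_eq_rtimes[OF nsp_eq_refl nsp_star_plus_unfold]) simp_all
  also have "nsp_eq A \<dots> (rtimes (rtimes ?T b) ?ds)"
    using nsp_eq_by_monomials[of A "[?as, b, ?ds, ?Ds, c]" "[?as, b, ?ds, ?Ds, c]"
        "SVar 0 \<otimes> SVar 1 \<otimes> (SVar 2 \<oplus> SVar 3 \<otimes> (SVar 4 \<otimes> SVar 0 \<otimes> SVar 1) \<otimes> SVar 2)"
        "(SVar 0 \<oplus> SVar 0 \<otimes> SVar 1 \<otimes> SVar 3 \<otimes> SVar 4 \<otimes> SVar 0) \<otimes> SVar 1 \<otimes> SVar 2"]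
      a b c d by simp
  also have "nsp_eq A \<dots> (rtimes (rtimes ?As b) ?ds)"
    using b d by (intro nsp_eq_rtimes[OF nsp_eq_rtimes[OF nsp_eq_sym[OF nsp_star_pivot]] nsp_eq_refl]) simp_all
  finally show ?thesis .
qed

end

text \<open>The update performed by \<open>elim\<close> on a coefficient \<open>z\<close>, through a state with loop \<open>s\<close>, incoming
  coefficient \<open>x\<close> and outgoing coefficient \<open>y\<close>.\<close>

abbreviation bypass :: "'a rexp \<Rightarrow> 'a rexp \<Rightarrow> 'a rexp \<Rightarrow> 'a rexp \<Rightarrow> 'a rexp" where
  "bypass z x y s \<equiv> rplus z (rtimes (rtimes x (rstar s)) y)"

lemma nsp_bypass_commute:
  assumes a: "rexp_over A a" and b: "rexp_over A b" and c: "rexp_over A c" and d: "rexp_over A d"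
    and z: "rexp_over A z" and xp: "rexp_over A xp" and xq: "rexp_over A xq"
    and yp: "rexp_over A yp" and yq: "rexp_over A yq"
  shows "nsp_eq A (bypass (bypass z xp yp a) (bypass xq xp b a) (bypass yq c yp a) (bypass d c b a))
                  (bypass (bypass z xq yq d) (bypass xp xq c d) (bypass yp b yq d) (bypass a b c d))"
proof -
  let ?as = "rstar a" and ?ds = "rstar d"
  let ?Ds = "rstar (bypass d c b a)" and ?As = "rstar (bypass a b c d)"
  let ?Mpp = "rplus ?as (rtimes (rtimes (rtimes (rtimes ?as b) ?Ds) c) ?as)"
  let ?Mqq = "rplus ?ds (rtimes (rtimes (rtimes (rtimes ?ds c) ?As) b) ?ds)"
  let ?Mpq = "rtimes (rtimes ?as b) ?Ds" and ?Mpq' = "rtimes (rtimes ?As b) ?ds"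
  let ?Mqp = "rtimes (rtimes ?Ds c) ?as" and ?Mqp' = "rtimes (rtimes ?ds c) ?As"
  \<comment> \<open>\<open>z + x\<^sub>p M\<^sub>p\<^sub>p y\<^sub>p + x\<^sub>q M\<^sub>q\<^sub>q y\<^sub>q + x\<^sub>p M\<^sub>p\<^sub>q y\<^sub>q + x\<^sub>q M\<^sub>q\<^sub>p y\<^sub>p\<close> with \<open>M = [[a, b], [c, d]]\<^sup>*\<close>\<close>
  let ?C = "SVar 0 \<oplus> SVar 1 \<otimes> SVar 5 \<otimes> SVar 2 \<oplus> SVar 3 \<otimes> SVar 6 \<otimes> SVar 4
    \<oplus> SVar 1 \<otimes> SVar 7 \<otimes> SVar 4 \<oplus> SVar 3 \<otimes> SVar 8 \<otimes> SVar 2"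
  have "nsp_eq A (bypass (bypass z xp yp a) (bypass xq xp b a) (bypass yq c yp a) (bypass d c b a))
      (seval [z, xp, yp, xq, yq, ?Mpp, ?Ds, ?Mpq, ?Mqp] ?C)"
    using nsp_eq_by_monomials[of A "[z, xp, yp, xq, yq, ?as, b, c, ?Ds]" "[z, xp, yp, xq, yq, ?as, b, c, ?Ds]"
        "SVar 0 \<oplus> SVar 1 \<otimes> SVar 5 \<otimes> SVar 2
          \<oplus> (SVar 3 \<oplus> SVar 1 \<otimes> SVar 5 \<otimes> SVar 6) \<otimes> SVar 8 \<otimes> (SVar 4 \<oplus> SVar 7 \<otimes> SVar 5 \<otimes> SVar 2)"
        "SVar 0 \<oplus> SVar 1 \<otimes> (SVar 5 \<oplus> SVar 5 \<otimes> SVar 6 \<otimes> SVar 8 \<otimes> SVar 7 \<otimes> SVar 5) \<otimes> SVar 2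
          \<oplus> SVar 3 \<otimes> SVar 8 \<otimes> SVar 4 \<oplus> SVar 1 \<otimes> (SVar 5 \<otimes> SVar 6 \<otimes> SVar 8) \<otimes> SVar 4
          \<oplus> SVar 3 \<otimes> (SVar 8 \<otimes> SVar 7 \<otimes> SVar 5) \<otimes> SVar 2"]
      assms by (simp add: add_mset_commute)
  also have "nsp_eq A \<dots> (seval [z, xp, yp, xq, yq, ?As, ?Mqq, ?Mpq', ?Mqp'] ?C)"
  proof (rule nsp_eq_by_monomials)
    have "nsp_eq A ?Mpp ?As" "nsp_eq A ?Ds ?Mqq" "nsp_eq A ?Mpq ?Mpq'" "nsp_eq A ?Mqp ?Mqp'"
      using nsp_eq_sym[OF nsp_star_pivot[OF a b c d]] nsp_star_pivot[OF d c b a]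
        nsp_star_pivot_offdiag[OF a b c d] nsp_eq_sym[OF nsp_star_pivot_offdiag[OF d c b a]]
      by simp_all
    then show "list_all2 (nsp_eq A) [z, xp, yp, xq, yq, ?Mpp, ?Ds, ?Mpq, ?Mqp]
        [z, xp, yp, xq, yq, ?As, ?Mqq, ?Mpq', ?Mqp']"
      using assms by simp
  qed simp_all
  also have "nsp_eq A \<dots> (bypass (bypass z xq yq d) (bypass xp xq c d) (bypass yp b yq d) (bypass a b c d))"
    using nsp_eq_by_monomials[of A "[z, xp, yp, xq, yq, ?ds, b, c, ?As]" "[z, xp, yp, xq, yq, ?ds, b, c, ?As]"
        "SVar 0 \<oplus> SVar 1 \<otimes> SVar 8 \<otimes> SVar 2
          \<oplus> SVar 3 \<otimes> (SVar 5 \<oplus> SVar 5 \<otimes> SVar 7 \<otimes> SVar 8 \<otimes> SVar 6 \<otimes> SVar 5) \<otimes> SVar 4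
          \<oplus> SVar 1 \<otimes> (SVar 8 \<otimes> SVar 6 \<otimes> SVar 5) \<otimes> SVar 4 \<oplus> SVar 3 \<otimes> (SVar 5 \<otimes> SVar 7 \<otimes> SVar 8) \<otimes> SVar 2"
        "SVar 0 \<oplus> SVar 3 \<otimes> SVar 5 \<otimes> SVar 4
          \<oplus> (SVar 1 \<oplus> SVar 3 \<otimes> SVar 5 \<otimes> SVar 7) \<otimes> SVar 8 \<otimes> (SVar 2 \<oplus> SVar 6 \<otimes> SVar 5 \<otimes> SVar 4)"]
      assms by (simp add: add_mset_commute)
  finally show ?thesis .
qed

subsection \<open>Reordering the eliminations\<close>

fun sstate_Q :: "('q, 'a) sstate \<Rightarrow> 'q set" where
  "sstate_Q (SState Q' G H F K) = Q'"

fun sstate_over :: "'a set \<Rightarrow> ('q, 'a) sstate \<Rightarrow> bool" where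
  "sstate_over A (SState Q G H F K) \<longleftrightarrow> rexp_over A H \<and>
     (\<forall>r\<in>Q. rexp_over A (G r) \<and> rexp_over A (K r)) \<and> (\<forall>r\<in>Q. \<forall>s\<in>Q. rexp_over A (F r s))"

fun sstate_eq :: "'a set \<Rightarrow> ('q, 'a) sstate \<Rightarrow> ('q, 'a) sstate \<Rightarrow> bool" where
  "sstate_eq A (SState Q1 G1 H1 F1 K1) (SState Q2 G2 H2 F2 K2) \<longleftrightarrow> Q1 = Q2 \<and> nsp_eq A H1 H2 \<and>
     (\<forall>r\<in>Q1. nsp_eq A (G1 r) (G2 r) \<and> nsp_eq A (K1 r) (K2 r)) \<and>
     (\<forall>r\<in>Q1. \<forall>s\<in>Q1. nsp_eq A (F1 r s) (F2 r s))"

lemma sstate_eq_refl: "sstate_over A S \<Longrightarrow> sstate_eq A S S"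
  by (cases S) auto

lemma sstate_eq_sym: "sstate_eq A S1 S2 \<Longrightarrow> sstate_eq A S2 S1"
  by (cases S1; cases S2) (auto intro: nsp_eq_sym)

lemma sstate_eq_trans [trans]: "sstate_eq A S1 S2 \<Longrightarrow> sstate_eq A S2 S3 \<Longrightarrow> sstate_eq A S1 S3"
  by (cases S1; cases S2; cases S3) (simp; meson nsp_eq_trans)

lemma sstate_eq_H: "sstate_eq A S1 S2 \<Longrightarrow> nsp_eq A (sstate_H S1) (sstate_H S2)"
  by (cases S1; cases S2) auto

lemma sstate_Q_elim [simp]: "sstate_Q (elim S q) = sstate_Q S - {q}"
  by (cases S) (simp add: Let_def)

lemma sstate_over_elim: "sstate_over A S \<Longrightarrow> q \<in> sstate_Q S \<Longrightarrow> sstate_over A (elim S q)"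
  by (cases S) (auto simp: Let_def)

lemma sstate_eq_elim: "sstate_eq A S1 S2 \<Longrightarrow> q \<in> sstate_Q S1 \<Longrightarrow> sstate_eq A (elim S1 q) (elim S2 q)"
  by (cases S1; cases S2) (auto simp: Let_def intro!: nsp_eq_rplus nsp_eq_rtimes nsp_eq_rstar)

lemma sstate_eq_elim_commute:
  assumes S: "sstate_over A S" and "p \<in> sstate_Q S" "q \<in> sstate_Q S" "p \<noteq> q"
  shows "sstate_eq A (elim (elim S p) q) (elim (elim S q) p)"
proof (cases S)
  case (SState Q G H F K)
  with assms have "p \<in> Q" "q \<in> Q" "p \<noteq> q" "Q - {p} - {q} = Q - {q} - {p}"
    by auto
  with S SState show ?thesis
    by (simp add: Let_def) (intro conjI ballI; rule nsp_bypass_commute; simp)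
qed

lemma sstate_over_foldl_elim:
  "sstate_over A S \<Longrightarrow> distinct xs \<Longrightarrow> set xs \<subseteq> sstate_Q S \<Longrightarrow> sstate_over A (foldl elim S xs)"
proof (induction xs arbitrary: S)
  case (Cons x xs)
  then show ?case by (simp add: sstate_over_elim subset_Diff_insert)
qed simp

lemma sstate_eq_foldl_elim:
  "sstate_eq A S1 S2 \<Longrightarrow> distinct xs \<Longrightarrow> set xs \<subseteq> sstate_Q S1 \<Longrightarrow>
    sstate_eq A (foldl elim S1 xs) (foldl elim S2 xs)"
proof (induction xs arbitrary: S1 S2)
  case (Cons x xs)
  then have "sstate_eq A (elim S1 x) (elim S2 x)"
    by (intro sstate_eq_elim) auto
  from Cons.IH[OF this] Cons.prems show ?case
    by auto
qed simp

lemma sstate_eq_foldl_elim_move_to_front: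
  "sstate_over A S \<Longrightarrow> distinct (ys @ x # zs) \<Longrightarrow> set (ys @ x # zs) \<subseteq> sstate_Q S \<Longrightarrow>
    sstate_eq A (foldl elim S (ys @ x # zs)) (foldl elim S (x # ys @ zs))"
proof (induction ys arbitrary: S)
  case Nil
  then show ?case by (auto intro!: sstate_eq_refl sstate_over_foldl_elim sstate_over_elim)
next
  case (Cons y ys)
  have "sstate_eq A (foldl elim (elim S y) (ys @ x # zs)) (foldl elim (elim (elim S y) x) (ys @ zs))"
    using Cons.IH[of "elim S y"] Cons.prems sstate_over_elim[of A S y] by auto
  also have "sstate_eq A \<dots> (foldl elim (elim (elim S x) y) (ys @ zs))"
    using Cons.prems by (intro sstate_eq_foldl_elim sstate_eq_elim_commute) auto
  finally show ?case by simp
qed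

lemma sstate_eq_foldl_elim_perm:
  "sstate_over A S \<Longrightarrow> distinct xs \<Longrightarrow> distinct ys \<Longrightarrow> set xs = set ys \<Longrightarrow> set xs \<subseteq> sstate_Q S \<Longrightarrow>
    sstate_eq A (foldl elim S xs) (foldl elim S ys)"
proof (induction xs arbitrary: S ys)
  case Nil
  then show ?case by (simp add: sstate_eq_refl)
next
  case (Cons x xs)
  then obtain us vs where ys: "ys = us @ x # vs"
    by (metis list.set_intros(1) split_list)
  with Cons.prems have "set xs = set (us @ vs)"
    by auto
  then have "sstate_eq A (foldl elim (elim S x) xs) (foldl elim (elim S x) (us @ vs))"
    using Cons.IH[of "elim S x" "us @ vs"] Cons.prems sstate_over_elim[of A S x] ys by auto
  also have "sstate_eq A \<dots> (foldl elim S ys)"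
  proof (rule sstate_eq_sym)
    show "sstate_eq A (foldl elim S ys) (foldl elim (elim S x) (us @ vs))"
      using sstate_eq_foldl_elim_move_to_front[of A S us x vs] Cons.prems ys by simp
  qed
  finally show ?case by simp
qed

theorem corollary3p7:
  fixes Q :: "'q set" and A :: "'a set" and E :: "('q \<times> 'a \<times> 'q) set"
    and I T :: "'q set" and lab :: "'q \<Rightarrow> 'q \<Rightarrow> 'a rexp" and \<omega> \<omega>' :: "'q list"
  assumes "finite_automaton Q A E I T"
    and "label_exprs E lab"
    and "total_order_list Q \<omega>" and "total_order_list Q \<omega>'"
  shows "derivable (NSP_ax A) A (SR \<omega> Q I T lab) (SR \<omega>' Q I T lab)"
proof -
  let ?S = "SState Q (\<lambda>p. if p \<in> I then ROne else RZero) RZero lab (\<lambda>p. if p \<in> T then ROne else RZero)"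
  have "rexp_over A (lab r s)" for r s
  proof -
    have "{a. (r, a, s) \<in> E} \<subseteq> A"
      using assms(1) by (auto simp: finite_automaton_def)
    then show ?thesis
      using assms(2) sum_of_rexp_over unfolding label_exprs_def by (metis rexp_over_RZero)
  qed
  then have "sstate_eq A (foldl elim ?S \<omega>) (foldl elim ?S \<omega>')"
    using assms(3,4) by (intro sstate_eq_foldl_elim_perm) (auto simp: total_order_list_def)
  then show ?thesis
    unfolding SR_def by (rule sstate_eq_H)
qed

end
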